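(* Let $\mathcal{C}$ be a category, let $\otimes:\mathcal{C}\times\mathcal{C}\to\mathcal{C}$ be a functor, and let $\alpha$ be an associativity constraint for $\otimes$ (see context). Let $(P,\theta)$ be an idempotent in $\mathcal{C}$, i.e. $P\in\mathcal{C}$ and $\theta:P\otimes P\to P$ is an isomorphism. Let $C:P\to P$ be the unique automorphism making the diagram $$C\circ\theta\circ(\theta\otimes \mathrm{id}_P)=\theta\circ(\mathrm{id}_P\otimes\theta)\circ\alpha_{P,P,P}$$ hold as maps $(P\otimes P)\otimes P\to P$, i.e. $C=\theta\circ(\mathrm{id}_P\otimes\theta)\circ\alpha_{P,P,P}\circ(\theta\otimes\mathrm{id}_P)^{-1}\circ\theta^{-1}$. Suppose that $$\theta\circ(C\otimes\mathrm{id}_P)=C\circ\theta\quad\text{and}\quad \theta\circ(\mathrm{id}_P\otimes C)=C\circ\theta$$ as maps $P\otimes P\to P$. Then $C=\mathrm{id}_P$, i.e. $\theta$ is compatible with $\alpha$.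
   Context: An associativity constraint for a functor $\otimes:\mathcal{C}\times\mathcal{C}\to\mathcal{C}$ is a natural isomorphism $\alpha_{A,B,C}:(A\otimes B)\otimes C\to A\otimes(B\otimes C)$ (natural in $A,B,C\in\mathcal{C}$) satisfying the pentagon axiom: for all $A,B,C,D$, $(\mathrm{id}_A\otimes\alpha_{B,C,D})\circ\alpha_{A,B\otimes C,D}\circ(\alpha_{A,B,C}\otimes\mathrm{id}_D)=\alpha_{A,B,C\otimes D}\circ\alpha_{A\otimes B,C,D}$ as maps $((A\otimes B)\otimes C)\otimes D\to A\otimes(B\otimes(C\otimes D))$. No unit object or other monoidal structure is assumed. An idempotent structure $\theta$ on $P$ is called compatible with $\alpha$ if the automorphism $C$ defined in the claim is the identity. *)

theory Defs
  imports Main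
begin

text \<open>A category given by a set of objects Ob, a set of arrows Ar, domain/codomain
maps, a composition cmp g f (meaning g after f, defined when cd f = dm g) and identities.\<close>

definition category ::
  "'o set \<Rightarrow> 'm set \<Rightarrow> ('m \<Rightarrow> 'o) \<Rightarrow> ('m \<Rightarrow> 'o) \<Rightarrow> ('m \<Rightarrow> 'm \<Rightarrow> 'm) \<Rightarrow> ('o \<Rightarrow> 'm) \<Rightarrow> bool"
where
  "category Ob Ar dm cd cmp idm \<longleftrightarrow>
     (\<forall>f\<in>Ar. dm f \<in> Ob \<and> cd f \<in> Ob) \<and>
     (\<forall>A\<in>Ob. idm A \<in> Ar \<and> dm (idm A) = A \<and> cd (idm A) = A) \<and>
     (\<forall>f\<in>Ar. \<forall>g\<in>Ar. cd f = dm g \<longrightarrow>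
        cmp g f \<in> Ar \<and> dm (cmp g f) = dm f \<and> cd (cmp g f) = cd g) \<and>
     (\<forall>f\<in>Ar. cmp f (idm (dm f)) = f \<and> cmp (idm (cd f)) f = f) \<and>
     (\<forall>f\<in>Ar. \<forall>g\<in>Ar. \<forall>h\<in>Ar. cd f = dm g \<longrightarrow> cd g = dm h \<longrightarrow>
        cmp h (cmp g f) = cmp (cmp h g) f)"

definition hom :: "'m set \<Rightarrow> ('m \<Rightarrow> 'o) \<Rightarrow> ('m \<Rightarrow> 'o) \<Rightarrow> 'o \<Rightarrow> 'o \<Rightarrow> 'm set" where
  "hom Ar dm cd A B = {f \<in> Ar. dm f = A \<and> cd f = B}"

definition iso_arr ::
  "'m set \<Rightarrow> ('m \<Rightarrow> 'o) \<Rightarrow> ('m \<Rightarrow> 'o) \<Rightarrow> ('m \<Rightarrow> 'm \<Rightarrow> 'm) \<Rightarrow> ('o \<Rightarrow> 'm) \<Rightarrow> 'm \<Rightarrow> bool"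
where
  "iso_arr Ar dm cd cmp idm f \<longleftrightarrow> f \<in> Ar \<and>
     (\<exists>g\<in>Ar. dm g = cd f \<and> cd g = dm f \<and>
        cmp g f = idm (dm f) \<and> cmp f g = idm (cd f))"

definition bifunctor ::
  "'o set \<Rightarrow> 'm set \<Rightarrow> ('m \<Rightarrow> 'o) \<Rightarrow> ('m \<Rightarrow> 'o) \<Rightarrow> ('m \<Rightarrow> 'm \<Rightarrow> 'm) \<Rightarrow> ('o \<Rightarrow> 'm)
   \<Rightarrow> ('o \<Rightarrow> 'o \<Rightarrow> 'o) \<Rightarrow> ('m \<Rightarrow> 'm \<Rightarrow> 'm) \<Rightarrow> bool"
where
  "bifunctor Ob Ar dm cd cmp idm tO tA \<longleftrightarrow>
     (\<forall>A\<in>Ob. \<forall>B\<in>Ob. tO A B \<in> Ob) \<and>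
     (\<forall>f\<in>Ar. \<forall>g\<in>Ar. tA f g \<in> Ar \<and> dm (tA f g) = tO (dm f) (dm g)
        \<and> cd (tA f g) = tO (cd f) (cd g)) \<and>
     (\<forall>A\<in>Ob. \<forall>B\<in>Ob. tA (idm A) (idm B) = idm (tO A B)) \<and>
     (\<forall>f\<in>Ar. \<forall>g\<in>Ar. \<forall>f'\<in>Ar. \<forall>g'\<in>Ar. cd f = dm g \<longrightarrow> cd f' = dm g' \<longrightarrow>
        tA (cmp g f) (cmp g' f') = cmp (tA g g') (tA f f'))"

text \<open>Associativity constraint: natural isomorphism (A \<otimes> B) \<otimes> C \<rightarrow> A \<otimes> (B \<otimes> C)
satisfying the pentagon axiom (no unit assumed).\<close>

definition assoc_constraint ::
  "'o set \<Rightarrow> 'm set \<Rightarrow> ('m \<Rightarrow> 'o) \<Rightarrow> ('m \<Rightarrow> 'o) \<Rightarrow> ('m \<Rightarrow> 'm \<Rightarrow> 'm) \<Rightarrow> ('o \<Rightarrow> 'm)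
   \<Rightarrow> ('o \<Rightarrow> 'o \<Rightarrow> 'o) \<Rightarrow> ('m \<Rightarrow> 'm \<Rightarrow> 'm) \<Rightarrow> ('o \<Rightarrow> 'o \<Rightarrow> 'o \<Rightarrow> 'm) \<Rightarrow> bool"
where
  "assoc_constraint Ob Ar dm cd cmp idm tO tA \<alpha> \<longleftrightarrow>
     (\<forall>A\<in>Ob. \<forall>B\<in>Ob. \<forall>C\<in>Ob.
        \<alpha> A B C \<in> hom Ar dm cd (tO (tO A B) C) (tO A (tO B C)) \<and>
        iso_arr Ar dm cd cmp idm (\<alpha> A B C)) \<and>
     (\<forall>f\<in>Ar. \<forall>g\<in>Ar. \<forall>h\<in>Ar.
        cmp (tA f (tA g h)) (\<alpha> (dm f) (dm g) (dm h))
          = cmp (\<alpha> (cd f) (cd g) (cd h)) (tA (tA f g) h)) \<and>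
     (\<forall>A\<in>Ob. \<forall>B\<in>Ob. \<forall>C\<in>Ob. \<forall>D\<in>Ob.
        cmp (tA (idm A) (\<alpha> B C D)) (cmp (\<alpha> A (tO B C) D) (tA (\<alpha> A B C) (idm D)))
          = cmp (\<alpha> A B (tO C D)) (\<alpha> (tO A B) C D))"

end

theory Submission
  imports Defs
begin

(*
  Consider the composite E = pentagon_product : ((PP)P)P -> P which first runs along the long side of the
  pentagon for (P,P,P,P) and then multiplies everything with theta from the right.
  Rewriting E with the short side of the pentagon, naturality of alpha and the defining
  equation of C twice gives  E = C o C o X,  where X = left_product = theta o (theta (x) 1) o ((theta (x) 1) (x) 1)
  multiplies from the left.  Rewriting E directly with the defining equation of C, now under
  the functors 1 (x) - and - (x) 1, moves C out through the hypotheses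
  theta o (1 (x) C) = C o theta and theta o (C (x) 1) = C o theta, giving E = C o C o C o X.
  Since X and C are isomorphisms they cancel, so C = id.
*)

locale semigroupal_category =
  fixes Ob :: "'o set" and Ar :: "'m set" and dm cd :: "'m \<Rightarrow> 'o"
    and cmp :: "'m \<Rightarrow> 'm \<Rightarrow> 'm" and idm :: "'o \<Rightarrow> 'm"
    and tO :: "'o \<Rightarrow> 'o \<Rightarrow> 'o" and tA :: "'m \<Rightarrow> 'm \<Rightarrow> 'm"
    and \<alpha> :: "'o \<Rightarrow> 'o \<Rightarrow> 'o \<Rightarrow> 'm"
  assumes cat: "category Ob Ar dm cd cmp idm"
    and tens: "bifunctor Ob Ar dm cd cmp idm tO tA"
    and asc: "assoc_constraint Ob Ar dm cd cmp idm tO tA \<alpha>"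
begin

lemma ar_ob[simp]: "f \<in> Ar \<Longrightarrow> dm f \<in> Ob" "f \<in> Ar \<Longrightarrow> cd f \<in> Ob"
  using cat unfolding category_def by auto

lemma id_ar[simp]: "A \<in> Ob \<Longrightarrow> idm A \<in> Ar" "A \<in> Ob \<Longrightarrow> dm (idm A) = A"
  "A \<in> Ob \<Longrightarrow> cd (idm A) = A"
  using cat unfolding category_def by auto

lemma cmp_ar[simp]: "f \<in> Ar \<Longrightarrow> g \<in> Ar \<Longrightarrow> cd f = dm g \<Longrightarrow> cmp g f \<in> Ar"
  "f \<in> Ar \<Longrightarrow> g \<in> Ar \<Longrightarrow> cd f = dm g \<Longrightarrow> dm (cmp g f) = dm f"
  "f \<in> Ar \<Longrightarrow> g \<in> Ar \<Longrightarrow> cd f = dm g \<Longrightarrow> cd (cmp g f) = cd g"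
  using cat unfolding category_def by auto

lemma id_r[simp]: "f \<in> Ar \<Longrightarrow> dm f = A \<Longrightarrow> cmp f (idm A) = f"
  and id_l[simp]: "f \<in> Ar \<Longrightarrow> cd f = A \<Longrightarrow> cmp (idm A) f = f"
  using cat unfolding category_def by auto

lemma cmp_assoc[simp]: "f \<in> Ar \<Longrightarrow> g \<in> Ar \<Longrightarrow> h \<in> Ar \<Longrightarrow> cd f = dm g \<Longrightarrow> cd g = dm h \<Longrightarrow>
   cmp (cmp h g) f = cmp h (cmp g f)"
  using cat unfolding category_def by metis

text \<open>An equation between composites survives precomposition with any arrow; this is how
  the local hypotheses are applied in the middle of a long composite.\<close>

lemma cmp_eq_precomp:
  assumes "cmp a b = cmp c d" "a \<in> Ar" "b \<in> Ar" "c \<in> Ar" "d \<in> Ar" "x \<in> Ar"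
    "cd b = dm a" "cd d = dm c" "cd x = dm b" "cd x = dm d"
  shows "cmp a (cmp b x) = cmp c (cmp d x)"
  using assms by (metis cmp_assoc)

lemma tO_ob[simp]: "A \<in> Ob \<Longrightarrow> B \<in> Ob \<Longrightarrow> tO A B \<in> Ob"
  using tens unfolding bifunctor_def by auto

lemma tA_ar[simp]: "f \<in> Ar \<Longrightarrow> g \<in> Ar \<Longrightarrow> tA f g \<in> Ar"
  "f \<in> Ar \<Longrightarrow> g \<in> Ar \<Longrightarrow> dm (tA f g) = tO (dm f) (dm g)"
  "f \<in> Ar \<Longrightarrow> g \<in> Ar \<Longrightarrow> cd (tA f g) = tO (cd f) (cd g)"
  using tens unfolding bifunctor_def by auto

lemma tA_id[simp]: "A \<in> Ob \<Longrightarrow> B \<in> Ob \<Longrightarrow> tA (idm A) (idm B) = idm (tO A B)"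
  using tens unfolding bifunctor_def by auto

lemma tA_cmp: "f \<in> Ar \<Longrightarrow> g \<in> Ar \<Longrightarrow> f' \<in> Ar \<Longrightarrow> g' \<in> Ar \<Longrightarrow> cd f = dm g \<Longrightarrow> cd f' = dm g' \<Longrightarrow>
   tA (cmp g f) (cmp g' f') = cmp (tA g g') (tA f f')"
  using tens unfolding bifunctor_def by auto

lemma tA_id_cmp: "A \<in> Ob \<Longrightarrow> f \<in> Ar \<Longrightarrow> g \<in> Ar \<Longrightarrow> cd f = dm g \<Longrightarrow>
   tA (idm A) (cmp g f) = cmp (tA (idm A) g) (tA (idm A) f)"
  using tA_cmp[of "idm A" "idm A" f g] by simp

lemma tA_cmp_id: "A \<in> Ob \<Longrightarrow> f \<in> Ar \<Longrightarrow> g \<in> Ar \<Longrightarrow> cd f = dm g \<Longrightarrow>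
   tA (cmp g f) (idm A) = cmp (tA g (idm A)) (tA f (idm A))"
  using tA_cmp[of f g "idm A" "idm A"] by simp

lemma alpha_ar[simp]: "A \<in> Ob \<Longrightarrow> B \<in> Ob \<Longrightarrow> C \<in> Ob \<Longrightarrow> \<alpha> A B C \<in> Ar"
  "A \<in> Ob \<Longrightarrow> B \<in> Ob \<Longrightarrow> C \<in> Ob \<Longrightarrow> dm (\<alpha> A B C) = tO (tO A B) C"
  "A \<in> Ob \<Longrightarrow> B \<in> Ob \<Longrightarrow> C \<in> Ob \<Longrightarrow> cd (\<alpha> A B C) = tO A (tO B C)"
  using asc unfolding assoc_constraint_def hom_def by auto

lemma alpha_natural: "f \<in> Ar \<Longrightarrow> g \<in> Ar \<Longrightarrow> h \<in> Ar \<Longrightarrow>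
   cmp (tA f (tA g h)) (\<alpha> (dm f) (dm g) (dm h)) = cmp (\<alpha> (cd f) (cd g) (cd h)) (tA (tA f g) h)"
  using asc unfolding assoc_constraint_def by auto

lemma pentagon: "A \<in> Ob \<Longrightarrow> B \<in> Ob \<Longrightarrow> C \<in> Ob \<Longrightarrow> D \<in> Ob \<Longrightarrow>
   cmp (tA (idm A) (\<alpha> B C D)) (cmp (\<alpha> A (tO B C) D) (tA (\<alpha> A B C) (idm D)))
          = cmp (\<alpha> A B (tO C D)) (\<alpha> (tO A B) C D)"
  using asc unfolding assoc_constraint_def by auto

abbreviation iso :: "'m \<Rightarrow> bool" where
  "iso \<equiv> iso_arr Ar dm cd cmp idm"

lemma iso_idm: "A \<in> Ob \<Longrightarrow> iso (idm A)"
  unfolding iso_arr_def by (intro conjI bexI[of _ "idm A"]) auto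

lemma cmp_left_inverse:
  assumes "f \<in> Ar" "f' \<in> Ar" "cd f = dm f'" "cmp f' f = idm (dm f)" "x \<in> Ar" "cd x = dm f"
  shows "cmp f' (cmp f x) = x"
proof -
  have "cmp f' (cmp f x) = cmp (cmp f' f) x" using assms by (subst cmp_assoc) auto
  then show ?thesis using assms by simp
qed

lemma iso_cmp:
  assumes "iso f" "iso g" "cd f = dm g"
  shows "iso (cmp g f)"
proof -
  obtain f' where f': "f' \<in> Ar" "dm f' = cd f" "cd f' = dm f" "cmp f' f = idm (dm f)" "cmp f f' = idm (cd f)"
    using assms(1) unfolding iso_arr_def by blast
  obtain g' where g': "g' \<in> Ar" "dm g' = cd g" "cd g' = dm g" "cmp g' g = idm (dm g)" "cmp g g' = idm (cd g)"
    using assms(2) unfolding iso_arr_def by blast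
  have ar: "f \<in> Ar" "g \<in> Ar" using assms unfolding iso_arr_def by auto
  show ?thesis
    unfolding iso_arr_def using ar f' g' assms(3)
    by (intro conjI bexI[of _ "cmp f' g'"]) (auto simp: cmp_left_inverse)
qed

lemma iso_tA:
  assumes "iso f" "iso g"
  shows "iso (tA f g)"
proof -
  obtain f' where f': "f' \<in> Ar" "dm f' = cd f" "cd f' = dm f" "cmp f' f = idm (dm f)" "cmp f f' = idm (cd f)"
    using assms(1) unfolding iso_arr_def by blast
  obtain g' where g': "g' \<in> Ar" "dm g' = cd g" "cd g' = dm g" "cmp g' g = idm (dm g)" "cmp g g' = idm (cd g)"
    using assms(2) unfolding iso_arr_def by blast
  have ar: "f \<in> Ar" "g \<in> Ar" using assms unfolding iso_arr_def by auto
  show ?thesis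
    unfolding iso_arr_def using ar f' g'
    by (intro conjI bexI[of _ "tA f' g'"]) (auto simp flip: tA_cmp)
qed

lemma iso_cancel_right:
  assumes "iso f" "g \<in> Ar" "h \<in> Ar" "dm g = cd f" "dm h = cd f" "cmp g f = cmp h f"
  shows "g = h"
proof -
  obtain f' where f': "f' \<in> Ar" "dm f' = cd f" "cd f' = dm f" "cmp f f' = idm (cd f)"
    using assms(1) unfolding iso_arr_def by blast
  have "f \<in> Ar" using assms(1) unfolding iso_arr_def by blast
  have "g = cmp (cmp g f) f'" using assms(2,4) f' \<open>f \<in> Ar\<close> by simp
  also have "\<dots> = cmp (cmp h f) f'" by (simp only: assms(6))
  also have "\<dots> = h" using assms(3,5) f' \<open>f \<in> Ar\<close> by simp
  finally show ?thesis .
qed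

lemma iso_cancel_left:
  assumes "iso f" "g \<in> Ar" "h \<in> Ar" "cd g = dm f" "cd h = dm f" "cmp f g = cmp f h"
  shows "g = h"
proof -
  obtain f' where f': "f' \<in> Ar" "dm f' = cd f" "cd f' = dm f" "cmp f' f = idm (dm f)"
    using assms(1) unfolding iso_arr_def by blast
  have "f \<in> Ar" using assms(1) unfolding iso_arr_def by blast
  have "g = cmp f' (cmp f g)" using assms(2,4) f' \<open>f \<in> Ar\<close> by (simp add: cmp_left_inverse)
  also have "\<dots> = cmp f' (cmp f h)" by (simp only: assms(6))
  also have "\<dots> = h" using assms(3,5) f' \<open>f \<in> Ar\<close> by (simp add: cmp_left_inverse)
  finally show ?thesis .
qed

end

locale associator_defect = semigroupal_category +
  fixes P and \<theta> C
  assumes P_ob[simp]: "P \<in> Ob"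
    and theta_ar[simp]: "\<theta> \<in> Ar" "dm \<theta> = tO P P" "cd \<theta> = P"
    and C_ar[simp]: "C \<in> Ar" "dm C = P" "cd C = P"
    and C_def: "cmp C (cmp \<theta> (tA \<theta> (idm P))) = cmp \<theta> (cmp (tA (idm P) \<theta>) (\<alpha> P P P))"
begin

abbreviation I where "I \<equiv> idm P"
abbreviation Q where "Q \<equiv> tO P P"

lemma C_def_precomp:
  assumes "x \<in> Ar" "cd x = tO Q P"
  shows "cmp \<theta> (cmp (tA I \<theta>) (cmp (\<alpha> P P P) x)) = cmp C (cmp \<theta> (cmp (tA \<theta> I) x))"
  using cmp_eq_precomp[OF C_def[symmetric], of x] assms by simp

definition left_product where
  "left_product = cmp \<theta> (cmp (tA \<theta> I) (tA (tA \<theta> I) I))"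

lemma left_product_ar[simp]:
  "left_product \<in> Ar" "dm left_product = tO (tO Q P) P" "cd left_product = P"
  unfolding left_product_def by simp_all

lemma iso_left_product: "iso \<theta> \<Longrightarrow> iso left_product"
  unfolding left_product_def by (simp add: iso_cmp iso_tA iso_idm)

text \<open>The long side of the pentagon for (P,P,P,P), followed by multiplying from the right.\<close>

definition pentagon_product where
  "pentagon_product = cmp \<theta> (cmp (tA I \<theta>) (cmp (tA I (tA I \<theta>))
     (cmp (tA I (\<alpha> P P P)) (cmp (\<alpha> P Q P) (tA (\<alpha> P P P) I)))))"

text \<open>Via the pentagon, naturality of \<alpha> and the definition of C (used twice), the pentagon
  product equals C \<circ> C \<circ> left_product.\<close>

lemma pentagon_product_short_side:
  "pentagon_product = cmp C (cmp C left_product)"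
proof -
  have pent: "cmp (tA I (\<alpha> P P P)) (cmp (\<alpha> P Q P) (tA (\<alpha> P P P) I)) = cmp (\<alpha> P P Q) (\<alpha> Q P P)"
    using pentagon[OF P_ob P_ob P_ob P_ob] by simp
  have nat_right: "cmp (tA I (tA I \<theta>)) (\<alpha> P P Q) = cmp (\<alpha> P P P) (tA (idm Q) \<theta>)"
    using alpha_natural[of I I \<theta>] by simp
  have nat_left: "cmp (tA \<theta> (idm Q)) (\<alpha> Q P P) = cmp (\<alpha> P P P) (tA (tA \<theta> I) I)"
    using alpha_natural[of \<theta> I I] by simp
  have interchange1: "cmp (tA \<theta> I) (tA (idm Q) \<theta>) = tA \<theta> \<theta>"
    using tA_cmp[of "idm Q" \<theta> \<theta> I] by simp
  have interchange2: "cmp (tA I \<theta>) (tA \<theta> (idm Q)) = tA \<theta> \<theta>"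
    using tA_cmp[of \<theta> I "idm Q" \<theta>] by simp
  have "pentagon_product = cmp \<theta> (cmp (tA I \<theta>) (cmp (tA I (tA I \<theta>)) (cmp (\<alpha> P P Q) (\<alpha> Q P P))))"
    unfolding pentagon_product_def pent ..
  also have "\<dots> = cmp \<theta> (cmp (tA I \<theta>) (cmp (\<alpha> P P P) (cmp (tA (idm Q) \<theta>) (\<alpha> Q P P))))"
    using cmp_eq_precomp[OF nat_right, of "\<alpha> Q P P"] by simp
  also have "\<dots> = cmp C (cmp \<theta> (cmp (tA \<theta> I) (cmp (tA (idm Q) \<theta>) (\<alpha> Q P P))))"
    by (rule C_def_precomp) auto
  also have "\<dots> = cmp C (cmp \<theta> (cmp (tA \<theta> \<theta>) (\<alpha> Q P P)))"
    by (simp flip: interchange1)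
  also have "\<dots> = cmp C (cmp \<theta> (cmp (tA I \<theta>) (cmp (tA \<theta> (idm Q)) (\<alpha> Q P P))))"
    by (simp flip: interchange2)
  also have "\<dots> = cmp C (cmp \<theta> (cmp (tA I \<theta>) (cmp (\<alpha> P P P) (tA (tA \<theta> I) I))))"
    using nat_left by simp
  also have "\<dots> = cmp C (cmp C left_product)"
    unfolding left_product_def by (subst C_def_precomp) auto
  finally show ?thesis .
qed

text \<open>If C commutes with \<theta> in either tensor slot, the definition of C applied inside
  1 \<otimes> - and - \<otimes> 1 shows that the pentagon product equals C \<circ> C \<circ> C \<circ> left_product.\<close>

lemma pentagon_product_long_side:
  assumes C_right: "cmp \<theta> (tA C I) = cmp C \<theta>"
    and C_left: "cmp \<theta> (tA I C) = cmp C \<theta>"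
  shows "pentagon_product = cmp C (cmp C (cmp C left_product))"
proof -
  have nat_mid: "cmp (tA I (tA \<theta> I)) (\<alpha> P Q P) = cmp (\<alpha> P P P) (tA (tA I \<theta>) I)"
    using alpha_natural[of I \<theta> I] by simp
  have "pentagon_product = cmp \<theta> (cmp (tA I (cmp \<theta> (cmp (tA I \<theta>) (\<alpha> P P P))))
      (cmp (\<alpha> P Q P) (tA (\<alpha> P P P) I)))"
    unfolding pentagon_product_def by (simp add: tA_id_cmp)
  also have "\<dots> = cmp \<theta> (cmp (tA I (cmp C (cmp \<theta> (tA \<theta> I)))) (cmp (\<alpha> P Q P) (tA (\<alpha> P P P) I)))"
    by (simp only: C_def)
  also have "\<dots> = cmp \<theta> (cmp (tA I C) (cmp (tA I \<theta>) (cmp (tA I (tA \<theta> I))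
      (cmp (\<alpha> P Q P) (tA (\<alpha> P P P) I)))))"
    by (simp add: tA_id_cmp)
  also have "\<dots> = cmp C (cmp \<theta> (cmp (tA I \<theta>) (cmp (tA I (tA \<theta> I))
      (cmp (\<alpha> P Q P) (tA (\<alpha> P P P) I)))))"
    using cmp_eq_precomp[OF C_left] by simp
  also have "\<dots> = cmp C (cmp \<theta> (cmp (tA I \<theta>) (cmp (\<alpha> P P P) (cmp (tA (tA I \<theta>) I) (tA (\<alpha> P P P) I)))))"
    using cmp_eq_precomp[OF nat_mid, of "tA (\<alpha> P P P) I"] by simp
  also have "\<dots> = cmp C (cmp C (cmp \<theta> (cmp (tA \<theta> I) (cmp (tA (tA I \<theta>) I) (tA (\<alpha> P P P) I)))))"
    by (subst C_def_precomp) auto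
  also have "\<dots> = cmp C (cmp C (cmp \<theta> (tA (cmp \<theta> (cmp (tA I \<theta>) (\<alpha> P P P))) I)))"
    by (simp add: tA_cmp_id)
  also have "\<dots> = cmp C (cmp C (cmp \<theta> (tA (cmp C (cmp \<theta> (tA \<theta> I))) I)))"
    by (simp only: C_def)
  also have "\<dots> = cmp C (cmp C (cmp \<theta> (cmp (tA C I) (cmp (tA \<theta> I) (tA (tA \<theta> I) I)))))"
    by (simp add: tA_cmp_id)
  also have "\<dots> = cmp C (cmp C (cmp C left_product))"
    unfolding left_product_def using cmp_eq_precomp[OF C_right] by simp
  finally show ?thesis .
qed

text \<open>Comparing the two computations and cancelling the isomorphisms left_product and C.\<close>

theorem associator_defect_trivial:
  assumes "iso \<theta>" "iso C"
    and "cmp \<theta> (tA C I) = cmp C \<theta>" "cmp \<theta> (tA I C) = cmp C \<theta>"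
  shows "C = I"
proof -
  have "cmp (cmp C (cmp C C)) left_product = cmp C (cmp C (cmp C left_product))"
    by simp
  also have "\<dots> = cmp C (cmp C left_product)"
    using pentagon_product_long_side[OF assms(3,4)] pentagon_product_short_side by (rule subst)
  also have "\<dots> = cmp (cmp C (cmp C I)) left_product"
    by simp
  finally have "cmp C (cmp C C) = cmp C (cmp C I)"
    by (rule iso_cancel_right[OF iso_left_product[OF assms(1)], rotated -1]) simp_all
  then have "cmp C C = cmp C I"
    by (rule iso_cancel_left[OF assms(2), rotated -1]) simp_all
  then show ?thesis
    by (rule iso_cancel_left[OF assms(2), rotated -1]) simp_all
qed

end

theorem mainTheorem1:
  fixes Ob :: "'o set" and Ar :: "'m set" and dm cd :: "'m \<Rightarrow> 'o"
    and cmp :: "'m \<Rightarrow> 'm \<Rightarrow> 'm" and idm :: "'o \<Rightarrow> 'm"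
    and tO :: "'o \<Rightarrow> 'o \<Rightarrow> 'o" and tA :: "'m \<Rightarrow> 'm \<Rightarrow> 'm"
    and \<alpha> :: "'o \<Rightarrow> 'o \<Rightarrow> 'o \<Rightarrow> 'm"
    and P :: 'o and \<theta> C :: 'm
  assumes cat: "category Ob Ar dm cd cmp idm"
    and tens: "bifunctor Ob Ar dm cd cmp idm tO tA"
    and asc: "assoc_constraint Ob Ar dm cd cmp idm tO tA \<alpha>"
    and Pob: "P \<in> Ob"
    and th: "\<theta> \<in> hom Ar dm cd (tO P P) P" "iso_arr Ar dm cd cmp idm \<theta>"
    and Chom: "C \<in> hom Ar dm cd P P" "iso_arr Ar dm cd cmp idm C"
    and Cdef: "cmp C (cmp \<theta> (tA \<theta> (idm P)))
               = cmp \<theta> (cmp (tA (idm P) \<theta>) (\<alpha> P P P))"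
    and h1: "cmp \<theta> (tA C (idm P)) = cmp C \<theta>"
    and h2: "cmp \<theta> (tA (idm P) C) = cmp C \<theta>"
  shows "C = idm P"
proof -
  interpret associator_defect Ob Ar dm cd cmp idm tO tA \<alpha> P \<theta> C
    using th(1) Chom(1) unfolding hom_def
    by (intro associator_defect.intro semigroupal_category.intro associator_defect_axioms.intro
        cat tens asc Pob Cdef) simp_all
  show ?thesis using associator_defect_trivial[OF th(2) Chom(2) h1 h2] .
qed

end
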